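(* Let $A_1,A_2,A_3$ be finite subsets of $\mathbb{R}$ with $|A_1|\le |A_2|\le |A_3|$. Then \[ T^o(A_1,A_2,A_3)\lesssim |A_1|\,|A_2|^{5/3}\,|A_3|^{4/3}, \] and moreover \[ T(A_1,A_2,A_3)\lesssim |A_1|\,|A_2|^{5/3}\,|A_3|^{4/3}+|A_1|^2|A_3|^2 . \]
   Context: For finite $A_1,A_2,A_3\subseteq\mathbb{R}$, $T^o(A_1,A_2,A_3)$ is the number of triples $(u_1,u_2,u_3)$ of points of $\mathbb{R}^2$ with $u_i\in A_i\times A_i$ for $i=1,2,3$, $u_i\ne u_j$ for $i\ne j$, and $u_1,u_2,u_3$ collinear. For finite $A,B,C\subseteq\mathbb{R}$, $T(A,B,C)=\#\{(a_1,a_2,b_1,b_2,c_1,c_2)\in A^2\times B^2\times C^2:\ (b_1-a_1)(c_2-a_2)=(c_1-a_1)(b_2-a_2)\}$. Notation: $X\lesssim Y$ means $X\le C\,Y(\log(2+N))^{c}$ for some absolute constants $C,c>0$, where $N$ is the largest cardinality of the finite sets in the statement; $X\gtrsim Y$ means $Y\lesssim X$. *)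

theory Defs
  imports "HOL-Analysis.Analysis"
begin

definition Tcol :: "real set \<Rightarrow> real set \<Rightarrow> real set \<Rightarrow> nat" where
  "Tcol A1 A2 A3 = card {(u1, u2, u3).
      u1 \<in> A1 \<times> A1 \<and> u2 \<in> A2 \<times> A2 \<and> u3 \<in> A3 \<times> A3 \<and>
      u1 \<noteq> u2 \<and> u1 \<noteq> u3 \<and> u2 \<noteq> u3 \<and> collinear {u1, u2 :: real \<times> real, u3}}"

definition Tsol :: "real set \<Rightarrow> real set \<Rightarrow> real set \<Rightarrow> nat" where
  "Tsol A B C = card {((a1, a2), (b1, b2), (c1, c2)).
      (a1::real) \<in> A \<and> a2 \<in> A \<and> b1 \<in> B \<and> b2 \<in> B \<and> c1 \<in> C \<and> c2 \<in> C \<and>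
      (b1 - a1) * (c2 - a2) = (c1 - a1) * (b2 - a2)}"

end

theory Submission
  imports Defs "HOL-Library.Discrete_Functions"
begin

(* A collinear triple of pairwise distinct points
   whose first two points differ in both coordinates lies on a line of nonzero slope through a
   point of each grid A_i x A_i; the other triples, and the degenerate solutions of the
   determinant equation defining T, number at most 2|A1|^2|A2||A3| + 3|A1|^2|A3|^2. So it
   suffices to bound the sum of k1 k2 k3 over such lines L, where k_i is the number of points
   of A_i x A_i on L.

   Group the lines by the dyadic sizes (floor_log k1, floor_log k2, floor_log k3); there are
   O(log^3 N) classes. For a class of s lines with k_i ~ t_i, ordered pairs of distinct points
   determine their line, so t1 t2 s <= 2 |A1|^2 |A2|^2, and a Szemeredi-Trotter bound for
   Cartesian grids gives t_i^3 s <= 100 |A_i|^4 once t_i >= 8. Multiplying the grid bounds for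
   i = 1, 2, 3 (or, when t1 is small, the pair bound cubed with the grid bounds for i = 2 once and
   i = 3 twice) gives t1 t2 t3 s <~ |A1| |A2|^(5/3) |A3|^(4/3).

   The grid bound itself is elementary: cut A x B, along the orders of the two coordinates, into
   about (k/4)^2 cells of about 4|A|/k by 4|B|/k points. A line of nonzero slope is monotone, so
   it meets at most k/2 + 1 cells, and a line with k points of the grid therefore has about k
   ordered pairs of its points in a common cell; but distinct lines share at most one point and
   there are only about 25 |A|^2 |B|^2 / k^2 pairs of points in a common cell. *)

section \<open>Cells of a Cartesian grid\<close>

lemma card_le_card_image_plus_collisions:
  fixes f :: "'a \<Rightarrow> 'b"
  assumes "finite Q"
  shows "card Q \<le> card {(p, q). p \<in> Q \<and> q \<in> Q \<and> p \<noteq> q \<and> f p = f q} + card (f ` Q)"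
  using assms
proof (induction Q rule: finite_induct)
  case empty
  then show ?case by simp
next
  case (insert x F)
  let ?P = "\<lambda>F. {(p, q). p \<in> F \<and> q \<in> F \<and> p \<noteq> q \<and> f p = f q}"
  have fin: "finite (?P (insert x F))"
    by (rule finite_subset[of _ "insert x F \<times> insert x F"]) (use insert in auto)
  have sub: "?P F \<subseteq> ?P (insert x F)" by auto
  show ?case
  proof (cases "f x \<in> f ` F")
    case True
    then obtain y where y: "y \<in> F" "f y = f x" by auto
    with insert have "(x, y) \<in> ?P (insert x F) - ?P F" by auto
    then have "card (?P F) < card (?P (insert x F))"
      using fin sub by (intro psubset_card_mono) auto
    with True insert show ?thesis by (simp add: insert_absorb)
  next
    case False
    with insert show ?thesis using card_mono[OF fin sub] by simp
  qed
qed

definition rank :: "'a::linorder set \<Rightarrow> 'a \<Rightarrow> nat" where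
  "rank X x = card {y \<in> X. y < x}"

lemma rank_less_card: "finite X \<Longrightarrow> x \<in> X \<Longrightarrow> rank X x < card X"
  unfolding rank_def by (intro psubset_card_mono) auto

lemma rank_mono: "finite X \<Longrightarrow> x \<le> y \<Longrightarrow> rank X x \<le> rank X y"
  unfolding rank_def by (intro card_mono) auto

lemma rank_strict_mono: "finite X \<Longrightarrow> x \<in> X \<Longrightarrow> x < y \<Longrightarrow> rank X x < rank X y"
  unfolding rank_def by (intro psubset_card_mono) auto

lemma inj_on_rank: "finite X \<Longrightarrow> inj_on (rank X) X"
  by (rule inj_onI) (metis rank_strict_mono less_irrefl linorder_neqE)

lemma card_rank_div_eq_le:
  assumes "finite X" "D > 0"
  shows "card {x \<in> X. rank X x div D = i} \<le> D"
proof -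
  have "card {x \<in> X. rank X x div D = i} = card (rank X ` {x \<in> X. rank X x div D = i})"
    using inj_on_rank[OF assms(1)] by (intro card_image[symmetric]) (auto intro: inj_on_subset)
  also have "\<dots> \<le> card {i * D..<i * D + D}"
    by (intro card_mono)
      (use assms(2) in \<open>auto simp: add.commute dividend_less_div_times\<close>)
  finally show ?thesis by simp
qed

lemma rank_div_le_floor:
  assumes "finite X" "x \<in> X" "real (card X) \<le> c * real D"
  shows "rank X x div D \<le> nat \<lfloor>c\<rfloor>"
proof -
  have "rank X x < card X" using rank_less_card[OF assms(1,2)] .
  then have lt: "real (rank X x) < c * real D" using assms(3) by linarith
  then have "D > 0" by (cases "D = 0") auto
  have "real (rank X x div D) * real D \<le> real (rank X x)"
    by (metis of_nat_le_iff of_nat_mult div_times_less_eq_dividend)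
  with lt have "real (rank X x div D) * real D < c * real D" by linarith
  with \<open>D > 0\<close> have "real (rank X x div D) < c" by simp
  then show ?thesis by linarith
qed

lemma card_grid_chain_le:
  fixes C :: "(nat \<times> nat) set"
  assumes "C \<subseteq> {..X} \<times> {..Y}"
    and "\<And>c d. c \<in> C \<Longrightarrow> d \<in> C \<Longrightarrow> fst c \<le> fst d \<and> snd c \<le> snd d \<or> fst d \<le> fst c \<and> snd d \<le> snd c"
  shows "card C \<le> X + Y + 1"
proof -
  have "inj_on (\<lambda>c. fst c + snd c) C"
    by (rule inj_onI) (use assms(2) in \<open>fastforce simp: prod_eq_iff\<close>)
  then have "card C = card ((\<lambda>c. fst c + snd c) ` C)" by (simp add: card_image)
  also have "\<dots> \<le> card {..X + Y}" using assms(1) by (intro card_mono) auto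
  finally show ?thesis by simp
qed

lemma card_grid_antitone_chain_le:
  fixes C :: "(nat \<times> nat) set"
  assumes "C \<subseteq> {..X} \<times> {..Y}"
    and "\<And>c d. c \<in> C \<Longrightarrow> d \<in> C \<Longrightarrow> fst c \<le> fst d \<and> snd d \<le> snd c \<or> fst d \<le> fst c \<and> snd c \<le> snd d"
  shows "card C \<le> X + Y + 1"
proof -
  let ?flip = "\<lambda>c. (fst c, Y - snd c)"
  have "inj_on ?flip C"
  proof (rule inj_onI)
    fix c d assume "c \<in> C" "d \<in> C" "?flip c = ?flip d"
    moreover have "snd c \<le> Y" "snd d \<le> Y" using assms(1) \<open>c \<in> C\<close> \<open>d \<in> C\<close> by auto
    ultimately show "c = d" by (simp add: prod_eq_iff) arith
  qed
  then have "card C = card (?flip ` C)" by (simp add: card_image)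
  also have "\<dots> \<le> X + Y + 1"
  proof (rule card_grid_chain_le)
    show "?flip ` C \<subseteq> {..X} \<times> {..Y}" using assms(1) by auto
  next
    fix c d assume "c \<in> ?flip ` C" "d \<in> ?flip ` C"
    then obtain c' d' where "c' \<in> C" "d' \<in> C" "c = ?flip c'" "d = ?flip d'" by blast
    with assms show "fst c \<le> fst d \<and> snd c \<le> snd d \<or> fst d \<le> fst c \<and> snd d \<le> snd c"
      by (metis (no_types, lifting) diff_le_mono2 fst_conv snd_conv)
  qed
  finally show ?thesis .
qed

definition grid_cell :: "'a::linorder set \<Rightarrow> 'b::linorder set \<Rightarrow> nat \<Rightarrow> nat \<Rightarrow> 'a \<times> 'b \<Rightarrow> nat \<times> nat" where
  "grid_cell A B D E p = (rank A (fst p) div D, rank B (snd p) div E)"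

lemma grid_cell_fst_mono:
  "finite A \<Longrightarrow> fst p \<le> fst q \<Longrightarrow> fst (grid_cell A B D E p) \<le> fst (grid_cell A B D E q)"
  unfolding grid_cell_def by (simp add: div_le_mono rank_mono)

lemma grid_cell_snd_mono:
  "finite B \<Longrightarrow> snd p \<le> snd q \<Longrightarrow> snd (grid_cell A B D E p) \<le> snd (grid_cell A B D E q)"
  unfolding grid_cell_def by (simp add: div_le_mono rank_mono)

lemma grid_cell_le_floor:
  assumes "finite A" "finite B" "p \<in> A \<times> B" "real (card A) \<le> c * real D" "real (card B) \<le> c * real E"
  shows "grid_cell A B D E p \<in> {..nat \<lfloor>c\<rfloor>} \<times> {..nat \<lfloor>c\<rfloor>}"
  using assms rank_div_le_floor[OF assms(1), of "fst p" c D]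
    rank_div_le_floor[OF assms(2), of "snd p" c E]
  unfolding grid_cell_def by (auto simp: mem_Times_iff)

lemma card_same_cell_pairs_le:
  assumes "finite A" "finite B" "D > 0" "E > 0"
  shows "card {(p, q). p \<in> A \<times> B \<and> q \<in> A \<times> B \<and> grid_cell A B D E p = grid_cell A B D E q}
           \<le> card A * card B * D * E"
proof -
  let ?cell = "grid_cell A B D E"
  let ?block = "\<lambda>p. {x \<in> A. rank A x div D = fst (?cell p)} \<times> {y \<in> B. rank B y div E = snd (?cell p)}"
  have "card {(p, q). p \<in> A \<times> B \<and> q \<in> A \<times> B \<and> ?cell p = ?cell q} \<le> card (Sigma (A \<times> B) ?block)"
    by (rule card_mono) (use assms in \<open>auto simp: grid_cell_def\<close>)
  also have "\<dots> = (\<Sum>p\<in>A \<times> B. card {x \<in> A. rank A x div D = fst (?cell p)}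
                                 * card {y \<in> B. rank B y div E = snd (?cell p)})"
    using assms by (simp add: card_SigmaI card_cartesian_product)
  also have "\<dots> \<le> (\<Sum>p\<in>A \<times> B. D * E)"
    by (intro sum_mono mult_le_mono card_rank_div_eq_le assms)
  finally show ?thesis by (simp add: card_cartesian_product)
qed

section \<open>Rich lines in a Cartesian grid\<close>

type_synonym line = "real \<times> real"

text \<open>A line is encoded by its slope and intercept: \<open>(m, c)\<close> is the line \<open>y = m x + c\<close>.
  Vertical lines have no code; they are handled separately.\<close>

definition on_line :: "line \<Rightarrow> real \<times> real \<Rightarrow> bool" where
  "on_line L p \<longleftrightarrow> snd p = fst L * fst p + snd L"

definition line_points :: "real set \<Rightarrow> real set \<Rightarrow> line \<Rightarrow> (real \<times> real) set" where
  "line_points A B L = {p \<in> A \<times> B. on_line L p}"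

lemma on_line_fst_eq: "on_line L p \<Longrightarrow> on_line L q \<Longrightarrow> fst p = fst q \<Longrightarrow> p = q"
  unfolding on_line_def by (simp add: prod_eq_iff)

lemma on_line_snd_eq: "fst L \<noteq> 0 \<Longrightarrow> on_line L p \<Longrightarrow> on_line L q \<Longrightarrow> snd p = snd q \<Longrightarrow> p = q"
  unfolding on_line_def by (auto simp: prod_eq_iff)

lemma line_eq_if_on_line:
  assumes "on_line L p" "on_line L q" "on_line L' p" "on_line L' q" "p \<noteq> q"
  shows "L = L'"
proof -
  have "fst p \<noteq> fst q" using on_line_fst_eq assms by blast
  moreover have "snd p - snd q = fst L * (fst p - fst q)" "snd p - snd q = fst L' * (fst p - fst q)"
    using assms(1-4) unfolding on_line_def by (auto simp: algebra_simps)
  ultimately have "fst L = fst L'" by simp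
  with assms(1,3) show ?thesis unfolding on_line_def by (simp add: prod_eq_iff)
qed

lemma on_line_monotone:
  assumes "on_line L p" "on_line L q" "fst p \<le> fst q"
  shows "(0 < fst L \<longrightarrow> snd p \<le> snd q) \<and> (fst L < 0 \<longrightarrow> snd q \<le> snd p)"
  using assms unfolding on_line_def by (auto intro: mult_left_mono mult_left_mono_neg)

lemma card_line_points_le_fst:
  assumes "finite A" shows "card (line_points A B L) \<le> card A"
proof -
  have "inj_on fst (line_points A B L)"
    unfolding line_points_def inj_on_def using on_line_fst_eq by blast
  then show ?thesis
    by (rule card_inj_on_le) (use assms in \<open>auto simp: line_points_def\<close>)
qed

lemma card_line_points_le_snd:
  assumes "finite B" "fst L \<noteq> 0" shows "card (line_points A B L) \<le> card B"
proof -
  have "inj_on snd (line_points A B L)"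
    unfolding line_points_def inj_on_def using on_line_snd_eq[OF assms(2)] by blast
  then show ?thesis
    by (rule card_inj_on_le) (use assms in \<open>auto simp: line_points_def\<close>)
qed

lemma card_line_points_le_cell_collisions:
  fixes A B :: "real set"
  assumes "finite A" "finite B" "fst L \<noteq> 0"
    and cells: "\<And>p. p \<in> A \<times> B \<Longrightarrow> grid_cell A B D E p \<in> {..X} \<times> {..X}"
  shows "card (line_points A B L)
           \<le> card {(p, q). p \<in> line_points A B L \<and> q \<in> line_points A B L \<and> p \<noteq> q
                           \<and> grid_cell A B D E p = grid_cell A B D E q} + (2 * X + 1)"
proof -
  let ?Q = "line_points A B L" and ?cell = "grid_cell A B D E"
  have "finite ?Q" using assms(1,2) by (simp add: line_points_def)
  have sub: "?cell ` ?Q \<subseteq> {..X} \<times> {..X}" unfolding line_points_def using cells by blast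
  have comparable: "fst (?cell p) \<le> fst (?cell q) \<and>
      (if 0 < fst L then snd (?cell p) \<le> snd (?cell q) else snd (?cell q) \<le> snd (?cell p))"
    if "p \<in> ?Q" "q \<in> ?Q" "fst p \<le> fst q" for p q
    using on_line_monotone[of L p q] that assms(1-3)
    by (auto simp: line_points_def intro: grid_cell_fst_mono grid_cell_snd_mono)
  have "card (?cell ` ?Q) \<le> X + X + 1"
  proof (cases "0 < fst L")
    case True
    show ?thesis
      by (rule card_grid_chain_le[OF sub]) (use comparable True in \<open>auto, (meson nle_le)+\<close>)
  next
    case False
    show ?thesis
      by (rule card_grid_antitone_chain_le[OF sub]) (use comparable False in \<open>auto, (meson nle_le)+\<close>)
  qed
  then show ?thesis
    using card_le_card_image_plus_collisions[OF \<open>finite ?Q\<close>, of ?cell] by simp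
qed

lemma block_size_bounds:
  fixes a k :: real
  assumes "0 < k" "k \<le> a"
  shows "4 * a / k \<le> real (nat \<lceil>4 * a / k\<rceil>)" "real (nat \<lceil>4 * a / k\<rceil>) \<le> 5 * a / k"
proof -
  have "1 \<le> a / k" using assms by simp
  moreover have "real (nat \<lceil>4 * a / k\<rceil>) \<le> 4 * a / k + 1"
    using of_int_ceiling_le_add_one[of "4 * a / k"] assms by simp
  moreover have "5 * a / k = 4 * a / k + a / k" by (simp add: field_simps)
  ultimately show "4 * a / k \<le> real (nat \<lceil>4 * a / k\<rceil>)" "real (nat \<lceil>4 * a / k\<rceil>) \<le> 5 * a / k"
    using real_nat_ceiling_ge[of "4 * a / k"] by linarith+
qed

lemma sum_card_line_collisions_le:
  fixes f :: "real \<times> real \<Rightarrow> 'c"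
  assumes "finite A" "finite B" "finite S"
  shows "(\<Sum>L\<in>S. card {(p, q). p \<in> line_points A B L \<and> q \<in> line_points A B L \<and> p \<noteq> q \<and> f p = f q})
           \<le> card {(p, q). p \<in> A \<times> B \<and> q \<in> A \<times> B \<and> f p = f q}"
proof -
  define P where "P L = {(p, q). p \<in> line_points A B L \<and> q \<in> line_points A B L \<and> p \<noteq> q \<and> f p = f q}"
    for L
  let ?G = "{(p, q). p \<in> A \<times> B \<and> q \<in> A \<times> B \<and> f p = f q}"
  have "finite ?G"
    by (rule finite_subset[of _ "(A \<times> B) \<times> (A \<times> B)"]) (use assms(1,2) in auto)
  have "P L \<subseteq> ?G" for L by (auto simp: P_def line_points_def)
  have "(\<Sum>L\<in>S. card (P L)) = card (\<Union>L\<in>S. P L)"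
  proof (rule card_UN_disjoint[symmetric])
    show "\<forall>L\<in>S. finite (P L)" using \<open>finite ?G\<close> \<open>\<And>L. P L \<subseteq> ?G\<close> finite_subset by blast
    show "\<forall>L\<in>S. \<forall>L'\<in>S. L \<noteq> L' \<longrightarrow> P L \<inter> P L' = {}"
      unfolding P_def line_points_def by (auto dest: line_eq_if_on_line)
  qed (use assms(3) in simp)
  also have "\<dots> \<le> card ?G"
    by (rule card_mono[OF \<open>finite ?G\<close>]) (use \<open>\<And>L. P L \<subseteq> ?G\<close> in blast)
  finally show ?thesis unfolding P_def .
qed

lemma card_rich_lines_grid_le:
  fixes A B :: "real set" and S :: "line set" and k :: real
  assumes "finite A" "finite B" "finite S" "8 \<le> k"
    and slope: "\<And>L. L \<in> S \<Longrightarrow> fst L \<noteq> 0"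
    and rich: "\<And>L. L \<in> S \<Longrightarrow> k \<le> card (line_points A B L)"
  shows "real (card S) * k ^ 3 \<le> 100 * real (card A) ^ 2 * real (card B) ^ 2"
proof (cases "S = {}")
  case False
  then obtain L0 where "L0 \<in> S" by blast
  define a b where "a = real (card A)" and "b = real (card B)"
  have "0 < k" using assms(4) by simp
  have "k \<le> a" "k \<le> b"
    using rich[OF \<open>L0 \<in> S\<close>] card_line_points_le_fst[OF assms(1), of B L0]
      card_line_points_le_snd[OF assms(2) slope[OF \<open>L0 \<in> S\<close>], of A]
    unfolding a_def b_def by linarith+
  define X where "X = nat \<lfloor>k / 4\<rfloor>"
  define D where "D = nat \<lceil>4 * a / k\<rceil>"
  define E where "E = nat \<lceil>4 * b / k\<rceil>"
  have D: "4 * a / k \<le> D" "D \<le> 5 * a / k"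
    unfolding D_def by (fact block_size_bounds[OF \<open>0 < k\<close> \<open>k \<le> a\<close>])+
  have E: "4 * b / k \<le> E" "E \<le> 5 * b / k"
    unfolding E_def by (fact block_size_bounds[OF \<open>0 < k\<close> \<open>k \<le> b\<close>])+
  have "4 \<le> 4 * a / k" "4 \<le> 4 * b / k" using \<open>0 < k\<close> \<open>k \<le> a\<close> \<open>k \<le> b\<close> by (simp_all add: field_simps)
  then have "0 < real D" "0 < real E" using D(1) E(1) by linarith+
  then have "0 < D" "0 < E" by simp_all
  have "real (card A) \<le> k / 4 * real D" "real (card B) \<le> k / 4 * real E"
    using D(1) E(1) \<open>0 < k\<close> unfolding a_def b_def by (simp_all add: field_simps)
  then have cells: "grid_cell A B D E p \<in> {..X} \<times> {..X}" if "p \<in> A \<times> B" for p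
    unfolding X_def using grid_cell_le_floor[OF assms(1,2) that] by blast
  define P where "P L = {(p, q). p \<in> line_points A B L \<and> q \<in> line_points A B L \<and> p \<noteq> q
                               \<and> grid_cell A B D E p = grid_cell A B D E q}" for L
  have "k / 2 - 1 \<le> card (P L)" if "L \<in> S" for L
  proof -
    have "real X \<le> k / 4" unfolding X_def using \<open>0 < k\<close> by linarith
    then show ?thesis
      using rich[OF that] card_line_points_le_cell_collisions[OF assms(1,2) slope[OF that] cells]
      unfolding P_def by linarith
  qed
  then have "real (card S) * (k / 2 - 1) \<le> (\<Sum>L\<in>S. real (card (P L)))"
    using sum_mono[of S "\<lambda>_. k / 2 - 1"] by simp
  also have "\<dots> \<le> real (card A * card B * D * E)"
  proof -
    have "(\<Sum>L\<in>S. card (P L)) \<le> card A * card B * D * E"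
      using order_trans[OF sum_card_line_collisions_le[OF assms(1-3), of "grid_cell A B D E"]
          card_same_cell_pairs_le[OF assms(1,2) \<open>0 < D\<close> \<open>0 < E\<close>]]
      unfolding P_def .
    then show ?thesis by (metis of_nat_le_iff of_nat_sum)
  qed
  also have "\<dots> = a * b * D * E" by (simp add: a_def b_def)
  also have "\<dots> \<le> a * b * (5 * a / k) * (5 * b / k)"
    using D E \<open>0 < k\<close> by (intro mult_mono) (auto simp: a_def b_def)
  finally have "real (card S) * (k / 2 - 1) * k ^ 2 \<le> 25 * a ^ 2 * b ^ 2"
    using \<open>0 < k\<close> by (simp add: field_simps power2_eq_square)
  moreover have "real (card S) * k ^ 3 \<le> real (card S) * (4 * ((k / 2 - 1) * k ^ 2))"
    using assms(4) by (intro mult_left_mono) (simp_all add: power2_eq_square power3_eq_cube algebra_simps)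
  ultimately show ?thesis unfolding a_def b_def by linarith
qed simp

section \<open>Collinear triples and the lines they span\<close>

definition det_collinear :: "real \<times> real \<Rightarrow> real \<times> real \<Rightarrow> real \<times> real \<Rightarrow> bool" where
  "det_collinear u v w \<longleftrightarrow> (fst v - fst u) * (snd w - snd u) = (fst w - fst u) * (snd v - snd u)"

definition line_through :: "real \<times> real \<Rightarrow> real \<times> real \<Rightarrow> line" where
  "line_through u v = (let m = (snd v - snd u) / (fst v - fst u) in (m, snd u - m * fst u))"

lemma collinear_imp_det_collinear:
  assumes "collinear {u, v, w :: real \<times> real}"
  shows "det_collinear u v w"
proof -
  obtain d where d: "\<forall>x\<in>{u, v, w}. \<forall>y\<in>{u, v, w}. \<exists>c. x - y = c *\<^sub>R d"
    using assms unfolding collinear_def by blast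
  obtain c1 c2 where c: "v - u = c1 *\<^sub>R d" "w - u = c2 *\<^sub>R d" using d by blast
  have "fst v - fst u = c1 * fst d" "snd v - snd u = c1 * snd d"
    "fst w - fst u = c2 * fst d" "snd w - snd u = c2 * snd d"
    using arg_cong[OF c(1), of fst] arg_cong[OF c(1), of snd]
      arg_cong[OF c(2), of fst] arg_cong[OF c(2), of snd] by auto
  then show ?thesis unfolding det_collinear_def by (simp add: algebra_simps)
qed

lemma on_line_through:
  assumes "fst u \<noteq> fst v" "det_collinear u v w"
  shows "on_line (line_through u v) w"
proof -
  define m where "m = (snd v - snd u) / (fst v - fst u)"
  have L: "line_through u v = (m, snd u - m * fst u)" unfolding line_through_def m_def by simp
  have "snd v - snd u = m * (fst v - fst u)" using assms(1) unfolding m_def by simp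
  with assms have "(fst v - fst u) * (snd w - snd u) = (fst v - fst u) * (m * (fst w - fst u))"
    unfolding det_collinear_def by (simp add: algebra_simps)
  with assms(1) have "snd w - snd u = m * (fst w - fst u)" by simp
  then show ?thesis unfolding L on_line_def by (simp add: algebra_simps)
qed

lemma det_collinear_trivial: "det_collinear u v u" "det_collinear u v v"
  unfolding det_collinear_def by simp_all

lemma slope_line_through_nonzero:
  "fst u \<noteq> fst v \<Longrightarrow> snd u \<noteq> snd v \<Longrightarrow> fst (line_through u v) \<noteq> 0"
  unfolding line_through_def Let_def by simp

definition collinear_triples ::
    "real set \<Rightarrow> real set \<Rightarrow> real set \<Rightarrow> ((real \<times> real) \<times> (real \<times> real) \<times> (real \<times> real)) set" where
  "collinear_triples A1 A2 A3 = {(u1, u2, u3). u1 \<in> A1 \<times> A1 \<and> u2 \<in> A2 \<times> A2 \<and> u3 \<in> A3 \<times> A3 \<and>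
      u1 \<noteq> u2 \<and> u1 \<noteq> u3 \<and> u2 \<noteq> u3 \<and> det_collinear u1 u2 u3}"

definition oblique_triples ::
    "real set \<Rightarrow> real set \<Rightarrow> real set \<Rightarrow> ((real \<times> real) \<times> (real \<times> real) \<times> (real \<times> real)) set" where
  "oblique_triples A1 A2 A3 = {(u1, u2, u3). u1 \<in> A1 \<times> A1 \<and> u2 \<in> A2 \<times> A2 \<and> u3 \<in> A3 \<times> A3 \<and>
      fst u1 \<noteq> fst u2 \<and> snd u1 \<noteq> snd u2 \<and> det_collinear u1 u2 u3}"

definition oblique_lines :: "real set \<Rightarrow> real set \<Rightarrow> real set \<Rightarrow> line set" where
  "oblique_lines A1 A2 A3 = (\<lambda>(u1, u2, u3). line_through u1 u2) ` oblique_triples A1 A2 A3"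

definition richness :: "real set \<Rightarrow> line \<Rightarrow> nat" where
  "richness A L = card (line_points A A L)"

lemma finite_oblique_triples:
  "finite A1 \<Longrightarrow> finite A2 \<Longrightarrow> finite A3 \<Longrightarrow> finite (oblique_triples A1 A2 A3)"
  by (rule finite_subset[of _ "(A1 \<times> A1) \<times> (A2 \<times> A2) \<times> (A3 \<times> A3)"]) (auto simp: oblique_triples_def)

lemma finite_oblique_lines:
  "finite A1 \<Longrightarrow> finite A2 \<Longrightarrow> finite A3 \<Longrightarrow> finite (oblique_lines A1 A2 A3)"
  unfolding oblique_lines_def by (simp add: finite_oblique_triples)

lemma oblique_linesE:
  assumes "L \<in> oblique_lines A1 A2 A3"
  obtains u1 u2 u3 where "u1 \<in> A1 \<times> A1" "u2 \<in> A2 \<times> A2" "u3 \<in> A3 \<times> A3" "u1 \<noteq> u2"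
    "on_line L u1" "on_line L u2" "on_line L u3" "fst L \<noteq> 0"
proof -
  obtain u1 u2 u3 where t: "(u1, u2, u3) \<in> oblique_triples A1 A2 A3" "L = line_through u1 u2"
    using assms unfolding oblique_lines_def by auto
  then have u: "u1 \<in> A1 \<times> A1" "u2 \<in> A2 \<times> A2" "u3 \<in> A3 \<times> A3" "fst u1 \<noteq> fst u2"
      "snd u1 \<noteq> snd u2" "det_collinear u1 u2 u3"
    unfolding oblique_triples_def by auto
  show ?thesis
  proof (rule that[OF u(1-3)])
    show "u1 \<noteq> u2" using u(4) by blast
    show "on_line L u1" "on_line L u2" "on_line L u3"
      unfolding t(2) using on_line_through[OF u(4)] det_collinear_trivial u(6) by blast+
    show "fst L \<noteq> 0" unfolding t(2) using slope_line_through_nonzero[OF u(4,5)] .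
  qed
qed

lemma richness_pos:
  assumes "finite A1" "finite A2" "finite A3" "L \<in> oblique_lines A1 A2 A3"
  shows "0 < richness A1 L" "0 < richness A2 L" "0 < richness A3 L"
proof -
  obtain u1 u2 u3 where u: "u1 \<in> A1 \<times> A1" "u2 \<in> A2 \<times> A2" "u3 \<in> A3 \<times> A3"
    "on_line L u1" "on_line L u2" "on_line L u3"
    by (rule oblique_linesE[OF assms(4)])
  then show "0 < richness A1 L" "0 < richness A2 L" "0 < richness A3 L"
    unfolding richness_def using assms(1-3)
    by (auto simp: card_gt_0_iff line_points_def)
qed

lemma richness_le_card: "finite A \<Longrightarrow> richness A L \<le> card A"
  unfolding richness_def by (rule card_line_points_le_fst)

lemma card_oblique_triples_le_sum_richness:
  assumes "finite A1" "finite A2" "finite A3"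
  shows "card (oblique_triples A1 A2 A3)
           \<le> (\<Sum>L\<in>oblique_lines A1 A2 A3. richness A1 L * richness A2 L * richness A3 L)"
proof -
  let ?box = "\<lambda>L. line_points A1 A1 L \<times> line_points A2 A2 L \<times> line_points A3 A3 L"
  have "oblique_triples A1 A2 A3 \<subseteq> (\<Union>L\<in>oblique_lines A1 A2 A3. ?box L)"
  proof
    fix t assume t: "t \<in> oblique_triples A1 A2 A3"
    then obtain u1 u2 u3 where tu: "t = (u1, u2, u3)" "fst u1 \<noteq> fst u2" "det_collinear u1 u2 u3"
      unfolding oblique_triples_def by auto
    have "line_through u1 u2 \<in> oblique_lines A1 A2 A3"
      using t tu(1) unfolding oblique_lines_def by force
    moreover have "t \<in> ?box (line_through u1 u2)"
      using t tu on_line_through[OF tu(2)] det_collinear_trivial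
      unfolding oblique_triples_def line_points_def by auto
    ultimately show "t \<in> (\<Union>L\<in>oblique_lines A1 A2 A3. ?box L)" by blast
  qed
  then have "card (oblique_triples A1 A2 A3) \<le> card (\<Union>L\<in>oblique_lines A1 A2 A3. ?box L)"
    by (intro card_mono) (use assms finite_oblique_lines in \<open>auto simp: line_points_def\<close>)
  also have "\<dots> \<le> (\<Sum>L\<in>oblique_lines A1 A2 A3. card (?box L))"
    by (rule card_UN_le) (use assms finite_oblique_lines in auto)
  finally show ?thesis by (simp add: richness_def card_cartesian_product mult.assoc)
qed

lemma card_mult_le_twice_card_off_diagonal:
  assumes "finite Q1" "finite Q2" "p \<in> Q1" "q \<in> Q2" "p \<noteq> q"
  shows "card Q1 * card Q2 \<le> 2 * card {(x, y). x \<in> Q1 \<and> y \<in> Q2 \<and> x \<noteq> y}"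
proof -
  let ?D = "{(x, y). x \<in> Q1 \<and> y \<in> Q2 \<and> x \<noteq> y}"
  have "Q1 \<times> Q2 = ?D \<union> (\<lambda>x. (x, x)) ` (Q1 \<inter> Q2)" by auto
  moreover have "card ((\<lambda>x. (x, x)) ` (Q1 \<inter> Q2)) = card (Q1 \<inter> Q2)"
    by (rule card_image) (auto intro: inj_onI)
  moreover have "card (?D \<union> (\<lambda>x. (x, x)) ` (Q1 \<inter> Q2)) = card ?D + card ((\<lambda>x. (x, x)) ` (Q1 \<inter> Q2))"
    by (rule card_Un_disjoint) (use assms(1,2) finite_subset[of ?D "Q1 \<times> Q2"] in auto)
  ultimately have eq: "card Q1 * card Q2 = card ?D + card (Q1 \<inter> Q2)"
    by (simp add: card_cartesian_product[symmetric])
  have le: "card (Q1 \<inter> Q2) \<le> card Q1" "card (Q1 \<inter> Q2) \<le> card Q2"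
    using assms by (auto intro: card_mono)
  show ?thesis
  proof (cases "2 \<le> card Q1 \<or> 2 \<le> card Q2")
    case True
    then have "2 * card (Q1 \<inter> Q2) \<le> card Q1 * card Q2"
      using le mult_le_mono[of 2 "card Q1" "card (Q1 \<inter> Q2)" "card Q2"]
        mult_le_mono[of "card (Q1 \<inter> Q2)" "card Q1" 2 "card Q2"] by (auto simp: mult.commute)
    then show ?thesis using eq by linarith
  next
    case False
    moreover have "card Q1 \<noteq> 0" "card Q2 \<noteq> 0" using assms by auto
    ultimately have "card Q1 = 1" "card Q2 = 1" by linarith+
    with assms have "Q1 \<inter> Q2 = {}" by (auto simp: card_1_singleton_iff)
    then show ?thesis using eq by simp
  qed
qed

lemma sum_richness_pairs_le:
  assumes "finite A1" "finite A2" "finite A3"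
  shows "(\<Sum>L\<in>oblique_lines A1 A2 A3. richness A1 L * richness A2 L) \<le> 2 * card A1 ^ 2 * card A2 ^ 2"
proof -
  define P where "P L = {(x, y). x \<in> line_points A1 A1 L \<and> y \<in> line_points A2 A2 L \<and> x \<noteq> y}" for L
  have "finite (P L)" for L
    by (rule finite_subset[of _ "(A1 \<times> A1) \<times> (A2 \<times> A2)"])
      (use assms in \<open>auto simp: P_def line_points_def\<close>)
  have "richness A1 L * richness A2 L \<le> 2 * card (P L)" if L: "L \<in> oblique_lines A1 A2 A3" for L
  proof -
    obtain u1 u2 where "u1 \<in> A1 \<times> A1" "u2 \<in> A2 \<times> A2" "u1 \<noteq> u2" "on_line L u1" "on_line L u2"
      using oblique_linesE[OF L] by metis
    then show ?thesis unfolding richness_def P_def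
      by (intro card_mult_le_twice_card_off_diagonal[of _ _ u1 u2])
        (use assms in \<open>auto simp: line_points_def\<close>)
  qed
  then have "(\<Sum>L\<in>oblique_lines A1 A2 A3. richness A1 L * richness A2 L)
      \<le> 2 * (\<Sum>L\<in>oblique_lines A1 A2 A3. card (P L))"
    by (simp add: sum_distrib_left sum_mono)
  also have "(\<Sum>L\<in>oblique_lines A1 A2 A3. card (P L)) = card (\<Union>L\<in>oblique_lines A1 A2 A3. P L)"
    by (rule card_UN_disjoint[symmetric])
      (use assms finite_oblique_lines \<open>\<And>L. finite (P L)\<close> in
        \<open>auto simp: P_def line_points_def dest: line_eq_if_on_line\<close>)
  also have "\<dots> \<le> card ((A1 \<times> A1) \<times> (A2 \<times> A2))"
    by (rule card_mono) (use assms in \<open>auto simp: P_def line_points_def\<close>)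
  finally show ?thesis by (simp add: card_cartesian_product power2_eq_square)
qed

lemma card_collinear_triples_le:
  assumes "finite A1" "finite A2" "finite A3"
  shows "card (collinear_triples A1 A2 A3)
           \<le> card (oblique_triples A1 A2 A3) + 2 * card A1 ^ 2 * card A2 * card A3"
proof -
  define V where "V = Sigma (A1 \<times> A1) (\<lambda>u. ({fst u} \<times> A2) \<times> ({fst u} \<times> A3))"
  define H where "H = Sigma (A1 \<times> A1) (\<lambda>u. (A2 \<times> {snd u}) \<times> (A3 \<times> {snd u}))"
  have "collinear_triples A1 A2 A3 \<subseteq> oblique_triples A1 A2 A3 \<union> V \<union> H"
  proof
    fix t assume t: "t \<in> collinear_triples A1 A2 A3"
    then obtain u1 u2 u3 where tu: "t = (u1, u2, u3)" "u1 \<noteq> u2" and det: "det_collinear u1 u2 u3"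
      unfolding collinear_triples_def by auto
    consider "fst u1 = fst u2" | "snd u1 = snd u2" | "fst u1 \<noteq> fst u2" "snd u1 \<noteq> snd u2" by blast
    then show "t \<in> oblique_triples A1 A2 A3 \<union> V \<union> H"
    proof cases
      case 1
      with tu(2) have "snd u2 - snd u1 \<noteq> 0" by (auto simp: prod_eq_iff)
      with 1 det have "fst u3 = fst u1" unfolding det_collinear_def by simp
      with 1 t tu show ?thesis unfolding V_def collinear_triples_def by (auto simp: mem_Times_iff)
    next
      case 2
      with tu(2) have "fst u2 - fst u1 \<noteq> 0" by (auto simp: prod_eq_iff)
      with 2 det have "snd u3 = snd u1" unfolding det_collinear_def by simp
      with 2 t tu show ?thesis unfolding H_def collinear_triples_def by (auto simp: mem_Times_iff)
    next
      case 3
      with t tu det show ?thesis unfolding oblique_triples_def collinear_triples_def by auto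
    qed
  qed
  then have "card (collinear_triples A1 A2 A3) \<le> card (oblique_triples A1 A2 A3 \<union> V \<union> H)"
    by (rule card_mono[rotated]) (use assms finite_oblique_triples in \<open>auto simp: V_def H_def\<close>)
  also have "\<dots> \<le> card (oblique_triples A1 A2 A3) + card V + card H"
    by (metis card_Un_le add_le_mono1 order_trans)
  moreover have "card V = card A1 ^ 2 * card A2 * card A3" "card H = card A1 ^ 2 * card A2 * card A3"
    unfolding V_def H_def using assms by (simp_all add: card_SigmaI card_cartesian_product power2_eq_square)
  ultimately show ?thesis by simp
qed

lemma finite_collinear_triples:
  "finite A1 \<Longrightarrow> finite A2 \<Longrightarrow> finite A3 \<Longrightarrow> finite (collinear_triples A1 A2 A3)"
  by (rule finite_subset[of _ "(A1 \<times> A1) \<times> (A2 \<times> A2) \<times> (A3 \<times> A3)"]) (auto simp: collinear_triples_def)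

lemma Tcol_le_card_collinear_triples:
  assumes "finite A1" "finite A2" "finite A3"
  shows "Tcol A1 A2 A3 \<le> card (collinear_triples A1 A2 A3)"
  unfolding Tcol_def
  by (rule card_mono[OF finite_collinear_triples[OF assms]])
    (auto simp: collinear_triples_def intro: collinear_imp_det_collinear)

lemma Tsol_eq_card_det_collinear:
  "Tsol A1 A2 A3 = card {(u1, u2, u3). u1 \<in> A1 \<times> A1 \<and> u2 \<in> A2 \<times> A2 \<and> u3 \<in> A3 \<times> A3
                                        \<and> det_collinear u1 u2 u3}"
  unfolding Tsol_def by (rule arg_cong[where f = card]) (auto simp: det_collinear_def)

lemma Tsol_le:
  assumes "finite A1" "finite A2" "finite A3"
  shows "Tsol A1 A2 A3 \<le> card (collinear_triples A1 A2 A3) + card A1 ^ 2 * card A3 ^ 2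
                          + 2 * card A1 ^ 2 * card A2 ^ 2"
proof -
  define E12 where "E12 = (\<lambda>(u, w). (u, u, w)) ` ((A1 \<times> A1) \<times> (A3 \<times> A3))"
  define E13 where "E13 = (\<lambda>(u, v). (u, v, u)) ` ((A1 \<times> A1) \<times> (A2 \<times> A2))"
  define E23 where "E23 = (\<lambda>(u, v). (u, v, v)) ` ((A1 \<times> A1) \<times> (A2 \<times> A2))"
  have "{(u1, u2, u3). u1 \<in> A1 \<times> A1 \<and> u2 \<in> A2 \<times> A2 \<and> u3 \<in> A3 \<times> A3 \<and> det_collinear u1 u2 u3}
      \<subseteq> collinear_triples A1 A2 A3 \<union> E12 \<union> E13 \<union> E23"
  proof
    fix t
    assume "t \<in> {(u1, u2, u3). u1 \<in> A1 \<times> A1 \<and> u2 \<in> A2 \<times> A2 \<and> u3 \<in> A3 \<times> A3 \<and> det_collinear u1 u2 u3}"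
    then obtain u1 u2 u3 where t: "t = (u1, u2, u3)"
      and u: "u1 \<in> A1 \<times> A1" "u2 \<in> A2 \<times> A2" "u3 \<in> A3 \<times> A3" "det_collinear u1 u2 u3"
      by blast
    consider "u1 = u2" | "u1 = u3" | "u2 = u3" | "u1 \<noteq> u2" "u1 \<noteq> u3" "u2 \<noteq> u3" by blast
    then show "t \<in> collinear_triples A1 A2 A3 \<union> E12 \<union> E13 \<union> E23"
    proof cases
      case 1
      then have "(u1, u2, u3) \<in> E12" unfolding E12_def using u by (intro rev_image_eqI[of "(u1, u3)"]) auto
      with t show ?thesis by blast
    next
      case 2
      then have "(u1, u2, u3) \<in> E13" unfolding E13_def using u by (intro rev_image_eqI[of "(u1, u2)"]) auto
      with t show ?thesis by blast
    next
      case 3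
      then have "(u1, u2, u3) \<in> E23" unfolding E23_def using u by (intro rev_image_eqI[of "(u1, u2)"]) auto
      with t show ?thesis by blast
    qed (use u t in \<open>simp add: collinear_triples_def\<close>)
  qed
  then have "Tsol A1 A2 A3 \<le> card (collinear_triples A1 A2 A3 \<union> E12 \<union> E13 \<union> E23)"
    unfolding Tsol_eq_card_det_collinear
    by (rule card_mono[rotated])
      (use assms finite_collinear_triples in \<open>simp add: E12_def E13_def E23_def\<close>)
  also have "\<dots> \<le> card (collinear_triples A1 A2 A3) + card E12 + card E13 + card E23"
    using card_Un_le[of "collinear_triples A1 A2 A3 \<union> E12 \<union> E13" E23]
      card_Un_le[of "collinear_triples A1 A2 A3 \<union> E12" E13]
      card_Un_le[of "collinear_triples A1 A2 A3" E12] by linarith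
  moreover have "card E12 \<le> card A1 ^ 2 * card A3 ^ 2" "card E13 \<le> card A1 ^ 2 * card A2 ^ 2"
    "card E23 \<le> card A1 ^ 2 * card A2 ^ 2"
    unfolding E12_def E13_def E23_def using assms
    by (auto intro!: card_image_le[THEN order_trans] simp: card_cartesian_product power2_eq_square)
  ultimately show ?thesis by linarith
qed

section \<open>Dyadic decomposition\<close>

lemma weighted_product_power6:
  fixes n1 n2 n3 :: real
  assumes "0 \<le> n2" "0 \<le> n3"
  shows "(n1 * n2 powr (5/3) * n3 powr (4/3)) ^ 6 = n1 ^ 6 * n2 ^ 10 * n3 ^ 8"
proof -
  have pw: "(x powr (real k / 3)) ^ 6 = x ^ (2 * k)" if "0 \<le> x" "0 < k" for x :: real and k :: nat
  proof (cases "x = 0")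
    case False
    then have "(x powr (real k / 3)) ^ 6 = x powr real (2 * k)" by (simp add: powr_power)
    with False that(1) show ?thesis using powr_realpow[of x "2 * k"] by simp
  qed (use that in simp)
  show ?thesis
    using pw[OF assms(1), of 5] pw[OF assms(2), of 4] by (simp add: power_mult_distrib)
qed

lemma le_weighted_product_if_power6_le:
  fixes x c n1 n2 n3 :: real
  assumes "0 \<le> c" "0 \<le> n1" "0 \<le> n2" "0 \<le> n3" "x ^ 6 \<le> c ^ 6 * (n1 ^ 6 * n2 ^ 10 * n3 ^ 8)"
  shows "x \<le> c * (n1 * n2 powr (5/3) * n3 powr (4/3))"
proof -
  have "x ^ 6 \<le> (c * (n1 * n2 powr (5/3) * n3 powr (4/3))) ^ 6"
    using assms(5) by (simp only: power_mult_distrib[of c] weighted_product_power6[OF assms(3,4)])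
  moreover have "0 \<le> c * (n1 * n2 powr (5/3) * n3 powr (4/3))" using assms by simp
  ultimately show ?thesis
    using power_mono_iff[of x _ 6] by (cases "0 \<le> x") auto
qed

lemma power6_product_le_of_grid_bounds:
  fixes n1 n2 n3 u1 u2 u3 s :: real
  assumes n: "1 \<le> n1" "n1 \<le> n2" "n2 \<le> n3" and u: "1 \<le> u1" "1 \<le> u2" "1 \<le> u3" and "0 \<le> s"
    and U12: "u1 * u2 * s \<le> 2 * n1 ^ 2 * n2 ^ 2"
    and U1: "u1 = 1 \<or> u1 ^ 3 * s \<le> 100 * n1 ^ 4"
    and U2: "u2 ^ 3 * s \<le> 100 * n2 ^ 4"
    and U3: "u3 ^ 3 * s \<le> 100 * n3 ^ 4"
  shows "(u1 * u2 * u3 * s) ^ 6 \<le> 100 ^ 6 * (n1 ^ 6 * n2 ^ 10 * n3 ^ 8)"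
proof -
  define N where "N = n1 ^ 6 * n2 ^ 10 * n3 ^ 8"
  have pos: "0 \<le> u1 * u2 * s" "0 \<le> u2 ^ 3 * s" "0 \<le> u3 ^ 3 * s" using u \<open>0 \<le> s\<close> by simp_all
  from U1 show ?thesis
  proof
    assume "u1 = 1"
    have "(u1 * u2 * u3 * s) ^ 6 = (u1 * u2 * s) ^ 3 * (u2 ^ 3 * s) * (u3 ^ 3 * s) ^ 2"
      using \<open>u1 = 1\<close> by algebra
    also have "\<dots> \<le> (2 * n1 ^ 2 * n2 ^ 2) ^ 3 * (100 * n2 ^ 4) * (100 * n3 ^ 4) ^ 2"
      using mult_mono[OF mult_mono[OF power_mono[OF U12, of 3] U2] power_mono[OF U3, of 2]] pos by simp
    also have "\<dots> = 8000000 * N" unfolding N_def by algebra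
    also have "\<dots> \<le> 100 ^ 6 * N" unfolding N_def using n by simp
    finally show ?thesis unfolding N_def .
  next
    assume U1: "u1 ^ 3 * s \<le> 100 * n1 ^ 4"
    have "(u1 * u2 * u3 * s) ^ 3 = (u1 ^ 3 * s) * (u2 ^ 3 * s) * (u3 ^ 3 * s)" by algebra
    also have "\<dots> \<le> (100 * n1 ^ 4) * (100 * n2 ^ 4) * (100 * n3 ^ 4)"
      using mult_mono[OF mult_mono[OF U1 U2] U3] pos u \<open>0 \<le> s\<close> by simp
    finally have "((u1 * u2 * u3 * s) ^ 3) ^ 2 \<le> ((100 * n1 ^ 4) * (100 * n2 ^ 4) * (100 * n3 ^ 4)) ^ 2"
      using u \<open>0 \<le> s\<close> by (intro power_mono) auto
    also have "\<dots> = 100 ^ 6 * (n1 ^ 2 * (n1 ^ 6 * n2 ^ 8 * n3 ^ 8))" by algebra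
    also have "\<dots> \<le> 100 ^ 6 * (n2 ^ 2 * (n1 ^ 6 * n2 ^ 8 * n3 ^ 8))"
      using n by (intro mult_left_mono mult_right_mono power_mono) auto
    also have "\<dots> = 100 ^ 6 * N" unfolding N_def by algebra
    finally show ?thesis unfolding N_def by (simp flip: power_mult)
  qed
qed

lemma product_le_of_incidence_bounds:
  fixes n1 n2 n3 t1 t2 t3 s :: real
  assumes n: "1 \<le> n1" "n1 \<le> n2" "n2 \<le> n3" and t: "1 \<le> t1" "1 \<le> t2" "1 \<le> t3" and "0 \<le> s"
    and pairs: "t1 * t2 * s \<le> 2 * n1 ^ 2 * n2 ^ 2"
    and rich1: "8 \<le> t1 \<Longrightarrow> t1 ^ 3 * s \<le> 100 * n1 ^ 4"
    and rich2: "8 \<le> t2 \<Longrightarrow> t2 ^ 3 * s \<le> 100 * n2 ^ 4"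
    and rich3: "8 \<le> t3 \<Longrightarrow> t3 ^ 3 * s \<le> 100 * n3 ^ 4"
  shows "t1 * t2 * t3 * s \<le> 51200 * (n1 * n2 powr (5/3) * n3 powr (4/3))"
proof -
  define u1 u2 u3 where "u1 = (if 8 \<le> t1 then t1 else 1)" and "u2 = (if 8 \<le> t2 then t2 else 1)"
    and "u3 = (if 8 \<le> t3 then t3 else 1)"
  have u: "1 \<le> u1" "1 \<le> u2" "1 \<le> u3" "u1 \<le> t1" "u2 \<le> t2" "u3 \<le> t3"
    "t1 \<le> 8 * u1" "t2 \<le> 8 * u2" "t3 \<le> 8 * u3"
    using t unfolding u1_def u2_def u3_def by auto
  have "1 * s \<le> t1 * t2 * s"
    using t \<open>0 \<le> s\<close> mult_mono[of 1 t1 1 t2] by (intro mult_right_mono) auto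
  with pairs have s: "s \<le> 2 * (n1 ^ 2 * n2 ^ 2)" by (simp add: mult.assoc)
  have "n1 ^ 2 * n2 ^ 2 \<le> n2 ^ 2 * n2 ^ 2" "n2 ^ 2 * n2 ^ 2 \<le> n3 ^ 2 * n3 ^ 2"
    using n by (intro mult_mono power_mono; simp)+
  then have "n1 ^ 2 * n2 ^ 2 \<le> n2 ^ 4" "n2 ^ 4 \<le> n3 ^ 4"
    by (simp_all add: power4_eq_xxxx power2_eq_square mult.assoc)
  moreover have "0 \<le> n1 ^ 2 * n2 ^ 2" by simp
  ultimately have s4: "s \<le> 100 * n2 ^ 4" "s \<le> 100 * n3 ^ 4" using s by linarith+
  have "u1 * u2 * s \<le> t1 * t2 * s"
    using u \<open>0 \<le> s\<close> by (intro mult_right_mono mult_mono) auto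
  with pairs have "u1 * u2 * s \<le> 2 * n1 ^ 2 * n2 ^ 2" by linarith
  then have "(u1 * u2 * u3 * s) ^ 6 \<le> 100 ^ 6 * (n1 ^ 6 * n2 ^ 10 * n3 ^ 8)"
    using n u \<open>0 \<le> s\<close> rich1 rich2 rich3 s4 unfolding u1_def u2_def u3_def
    by (intro power6_product_le_of_grid_bounds) auto
  then have "u1 * u2 * u3 * s \<le> 100 * (n1 * n2 powr (5/3) * n3 powr (4/3))"
    by (rule le_weighted_product_if_power6_le[rotated 4]) (use n in auto)
  moreover have "t1 * t2 * t3 * s \<le> (8 * u1) * (8 * u2) * (8 * u3) * s"
    using u t \<open>0 \<le> s\<close> by (intro mult_mono) auto
  ultimately show ?thesis by simp
qed

lemma real_floor_log_bounds:
  assumes "0 < n"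
  shows "2 ^ floor_log n \<le> real n" "real n < 2 * 2 ^ floor_log n"
proof -
  have "real (2 ^ floor_log n) \<le> real n" "real n < real (2 * 2 ^ floor_log n)"
    using floor_log_exp2_le[OF assms] floor_log_exp2_gt[of n]
    by (simp_all only: of_nat_le_iff of_nat_less_iff)
  then show "2 ^ floor_log n \<le> real n" "real n < 2 * 2 ^ floor_log n" by simp_all
qed

lemma card_rich_oblique_lines_le:
  assumes fin: "finite A1" "finite A2" "finite A3" and C: "C \<subseteq> oblique_lines A1 A2 A3"
    and "finite A" "8 \<le> t" and rich: "\<And>L. L \<in> C \<Longrightarrow> t \<le> real (richness A L)"
  shows "t ^ 3 * real (card C) \<le> 100 * real (card A) ^ 4"
proof -
  have "real (card C) * t ^ 3 \<le> 100 * real (card A) ^ 2 * real (card A) ^ 2"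
  proof (rule card_rich_lines_grid_le[OF assms(5,5) _ assms(6)])
    show "finite C" using finite_subset[OF C finite_oblique_lines[OF fin]] .
    show "fst L \<noteq> 0" if "L \<in> C" for L using C that by (auto elim: oblique_linesE)
    show "t \<le> real (card (line_points A A L))" if "L \<in> C" for L
      using rich[OF that] unfolding richness_def .
  qed
  then show ?thesis by (simp add: mult.commute power4_eq_xxxx power2_eq_square)
qed

lemma card_mult_le_sum_richness_pairs:
  fixes t1 t2 :: real
  assumes fin: "finite A1" "finite A2" "finite A3" and C: "C \<subseteq> oblique_lines A1 A2 A3"
    and "0 \<le> t1" "0 \<le> t2" and rich: "\<And>L. L \<in> C \<Longrightarrow> t1 \<le> richness A1 L \<and> t2 \<le> richness A2 L"
  shows "t1 * t2 * real (card C) \<le> 2 * real (card A1) ^ 2 * real (card A2) ^ 2"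
proof -
  have "t1 * t2 * real (card C) = (\<Sum>L\<in>C. t1 * t2)" by simp
  also have "\<dots> \<le> (\<Sum>L\<in>C. real (richness A1 L) * real (richness A2 L))"
    using rich assms(5,6) by (intro sum_mono mult_mono) auto
  also have "\<dots> \<le> (\<Sum>L\<in>oblique_lines A1 A2 A3. real (richness A1 L) * real (richness A2 L))"
    by (rule sum_mono2[OF finite_oblique_lines[OF fin] C]) auto
  also have "\<dots> = real (\<Sum>L\<in>oblique_lines A1 A2 A3. richness A1 L * richness A2 L)" by simp
  also have "\<dots> \<le> real (2 * card A1 ^ 2 * card A2 ^ 2)"
    using sum_richness_pairs_le[OF fin] by (simp only: of_nat_le_iff)
  finally show ?thesis by simp
qed

lemma sum_richness_product_dyadic_class_le:
  assumes fin: "finite A1" "finite A2" "finite A3"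
    and card: "1 \<le> card A1" "card A1 \<le> card A2" "card A2 \<le> card A3"
    and C: "C \<subseteq> oblique_lines A1 A2 A3"
    and cls: "\<And>L. L \<in> C \<Longrightarrow> floor_log (richness A1 L) = i \<and> floor_log (richness A2 L) = j
                                  \<and> floor_log (richness A3 L) = l"
  shows "real (\<Sum>L\<in>C. richness A1 L * richness A2 L * richness A3 L)
           \<le> 409600 * (real (card A1) * real (card A2) powr (5/3) * real (card A3) powr (4/3))"
proof -
  define t1 t2 t3 where "t1 = (2::real) ^ i" and "t2 = (2::real) ^ j" and "t3 = (2::real) ^ l"
  define s where "s = real (card C)"
  have t: "1 \<le> t1" "1 \<le> t2" "1 \<le> t3" unfolding t1_def t2_def t3_def by simp_all
  have r: "t1 \<le> richness A1 L" "richness A1 L < 2 * t1" "t2 \<le> richness A2 L" "richness A2 L < 2 * t2"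
    "t3 \<le> richness A3 L" "richness A3 L < 2 * t3" if "L \<in> C" for L
  proof -
    have pos: "0 < richness A1 L" "0 < richness A2 L" "0 < richness A3 L"
      using richness_pos[OF fin] C that by blast+
    from cls[OF that] have "t1 = 2 ^ floor_log (richness A1 L)" "t2 = 2 ^ floor_log (richness A2 L)"
      "t3 = 2 ^ floor_log (richness A3 L)" unfolding t1_def t2_def t3_def by simp_all
    then show "t1 \<le> richness A1 L" "richness A1 L < 2 * t1" "t2 \<le> richness A2 L" "richness A2 L < 2 * t2"
      "t3 \<le> richness A3 L" "richness A3 L < 2 * t3"
      using real_floor_log_bounds[OF pos(1)] real_floor_log_bounds[OF pos(2)] real_floor_log_bounds[OF pos(3)]
      by simp_all
  qed
  have "real (\<Sum>L\<in>C. richness A1 L * richness A2 L * richness A3 L)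
      = (\<Sum>L\<in>C. real (richness A1 L) * real (richness A2 L) * real (richness A3 L))" by simp
  also have "\<dots> \<le> (\<Sum>L\<in>C. (2 * t1) * (2 * t2) * (2 * t3))"
  proof (rule sum_mono)
    fix L assume "L \<in> C"
    from r[OF this] t show "real (richness A1 L) * real (richness A2 L) * real (richness A3 L)
        \<le> (2 * t1) * (2 * t2) * (2 * t3)"
      by (intro mult_mono) auto
  qed
  also have "\<dots> = 8 * (t1 * t2 * t3 * s)" by (simp add: s_def)
  also have "t1 * t2 * t3 * s
      \<le> 51200 * (real (card A1) * real (card A2) powr (5/3) * real (card A3) powr (4/3))"
  proof (rule product_le_of_incidence_bounds)
    show "t1 * t2 * s \<le> 2 * real (card A1) ^ 2 * real (card A2) ^ 2"
      unfolding s_def using t r by (intro card_mult_le_sum_richness_pairs[OF fin C]) auto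
    show "8 \<le> t1 \<Longrightarrow> t1 ^ 3 * s \<le> 100 * real (card A1) ^ 4"
      unfolding s_def by (rule card_rich_oblique_lines_le[OF fin C fin(1) _ r(1)])
    show "8 \<le> t2 \<Longrightarrow> t2 ^ 3 * s \<le> 100 * real (card A2) ^ 4"
      unfolding s_def by (rule card_rich_oblique_lines_le[OF fin C fin(2) _ r(3)])
    show "8 \<le> t3 \<Longrightarrow> t3 ^ 3 * s \<le> 100 * real (card A3) ^ 4"
      unfolding s_def by (rule card_rich_oblique_lines_le[OF fin C fin(3) _ r(5)])
  qed (use card t in \<open>auto simp: s_def\<close>)
  finally show ?thesis by simp
qed

lemma sum_richness_product_le:
  assumes fin: "finite A1" "finite A2" "finite A3"
    and card: "1 \<le> card A1" "card A1 \<le> card A2" "card A2 \<le> card A3"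
  shows "real (\<Sum>L\<in>oblique_lines A1 A2 A3. richness A1 L * richness A2 L * richness A3 L)
           \<le> (real (floor_log (card A3)) + 1) ^ 3
              * (409600 * (real (card A1) * real (card A2) powr (5/3) * real (card A3) powr (4/3)))"
proof -
  define F where "F = floor_log (card A3)"
  define cls where
    "cls L = (floor_log (richness A1 L), floor_log (richness A2 L), floor_log (richness A3 L))" for L
  define w where "w L = richness A1 L * richness A2 L * richness A3 L" for L
  define B where "B = 409600 * (real (card A1) * real (card A2) powr (5/3) * real (card A3) powr (4/3))"
  have "floor_log (richness A L) \<le> F" if "finite A" "card A \<le> card A3" for A L
    unfolding F_def using richness_le_card[OF that(1), of L] that(2) by (intro floor_log_le_iff) simp
  then have cls_range: "cls ` oblique_lines A1 A2 A3 \<subseteq> {..F} \<times> {..F} \<times> {..F}"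
    using fin card unfolding cls_def by auto
  have "(\<Sum>L\<in>oblique_lines A1 A2 A3. w L)
      = (\<Sum>c\<in>{..F} \<times> {..F} \<times> {..F}. \<Sum>L\<in>{L \<in> oblique_lines A1 A2 A3. cls L = c}. w L)"
    by (rule sum.group[OF finite_oblique_lines[OF fin] _ cls_range, symmetric]) simp
  then have "real (\<Sum>L\<in>oblique_lines A1 A2 A3. w L)
      = (\<Sum>c\<in>{..F} \<times> {..F} \<times> {..F}. real (\<Sum>L\<in>{L \<in> oblique_lines A1 A2 A3. cls L = c}. w L))"
    by (simp only: of_nat_sum)
  also have "\<dots> \<le> (\<Sum>c\<in>{..F} \<times> {..F} \<times> {..F}. B)"
  proof (rule sum_mono)
    fix c :: "nat \<times> nat \<times> nat"
    obtain i j l where "c = (i, j, l)" by (cases c)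
    then show "real (\<Sum>L\<in>{L \<in> oblique_lines A1 A2 A3. cls L = c}. w L) \<le> B"
      unfolding w_def B_def cls_def
      by (intro sum_richness_product_dyadic_class_le[OF fin card, of _ i j l]) auto
  qed
  also have "\<dots> = (real F + 1) ^ 3 * B" by (simp add: card_cartesian_product power3_eq_cube algebra_simps)
  finally show ?thesis unfolding w_def B_def F_def .
qed

lemma floor_log_le_ln: "real (floor_log n) + 1 \<le> 3 * ln (2 + real n)"
proof -
  have "(2::real) ^ floor_log n \<le> 2 + real n"
  proof (cases "n = 0")
    case False
    with real_floor_log_bounds(1)[of n] show ?thesis by linarith
  qed simp
  then have "ln ((2::real) ^ floor_log n) \<le> ln (2 + real n)" by simp
  then have "real (floor_log n) * ln 2 \<le> ln (2 + real n)" by (simp add: ln_realpow)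
  moreover have "real (floor_log n) * (2/3) \<le> real (floor_log n) * ln 2"
    using ln2_ge_two_thirds by (intro mult_left_mono) auto
  moreover have "ln 2 \<le> ln (2 + real n)" by simp
  ultimately show ?thesis using ln2_ge_two_thirds by linarith
qed

lemma ln_cube_lower_bound:
  fixes x :: real
  assumes "0 \<le> x"
  shows "8/27 \<le> ln (2 + x) ^ 3"
proof -
  have "ln 2 \<le> ln (2 + x)" using assms by simp
  then have "2/3 \<le> ln (2 + x)" using ln2_ge_two_thirds by linarith
  then have "(2/3) ^ 3 \<le> ln (2 + x) ^ 3" by (rule power_mono) simp
  then show ?thesis by (simp add: power3_eq_cube)
qed

lemma square_mult_le_weighted_product:
  fixes n1 n2 n3 :: real
  assumes n: "1 \<le> n1" "n1 \<le> n2" "n2 \<le> n3"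
  shows "n1 ^ 2 * n2 * n3 \<le> n1 * n2 powr (5/3) * n3 powr (4/3)"
proof -
  have "(n1 ^ 2 * n2 * n3) ^ 6 = n1 ^ 6 * (n1 ^ 6 * n2 ^ 6 * n3 ^ 6)" by algebra
  also have "\<dots> \<le> (n2 ^ 4 * n3 ^ 2) * (n1 ^ 6 * n2 ^ 6 * n3 ^ 6)"
  proof (rule mult_right_mono)
    have "n1 ^ 6 = n1 ^ 4 * n1 ^ 2" by algebra
    also have "\<dots> \<le> n2 ^ 4 * n3 ^ 2" using n by (intro mult_mono power_mono) auto
    finally show "n1 ^ 6 \<le> n2 ^ 4 * n3 ^ 2" .
  qed (use n in simp)
  also have "\<dots> = n1 ^ 6 * n2 ^ 10 * n3 ^ 8" by algebra
  finally have "(n1 ^ 2 * n2 * n3) ^ 6 \<le> 1 ^ 6 * (n1 ^ 6 * n2 ^ 10 * n3 ^ 8)" by simp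
  then show ?thesis using le_weighted_product_if_power6_le[of 1 n1 n2 n3] n by simp
qed

lemma card_oblique_triples_le_log:
  assumes fin: "finite A1" "finite A2" "finite A3"
    and card: "1 \<le> card A1" "card A1 \<le> card A2" "card A2 \<le> card A3"
  shows "real (card (oblique_triples A1 A2 A3))
           \<le> 11059200 * (real (card A1) * real (card A2) powr (5/3) * real (card A3) powr (4/3))
              * ln (2 + real (card A3)) ^ 3"
proof -
  define T where "T = real (card A1) * real (card A2) powr (5/3) * real (card A3) powr (4/3)"
  have "0 \<le> T" unfolding T_def by simp
  have "real (card (oblique_triples A1 A2 A3))
      \<le> real (\<Sum>L\<in>oblique_lines A1 A2 A3. richness A1 L * richness A2 L * richness A3 L)"
    using card_oblique_triples_le_sum_richness[OF fin] by (simp only: of_nat_le_iff)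
  also have "\<dots> \<le> (real (floor_log (card A3)) + 1) ^ 3 * (409600 * T)"
    using sum_richness_product_le[OF fin card] unfolding T_def .
  also have "\<dots> \<le> (3 * ln (2 + real (card A3))) ^ 3 * (409600 * T)"
    using floor_log_le_ln[of "card A3"] \<open>0 \<le> T\<close> by (intro mult_right_mono power_mono) auto
  finally show ?thesis unfolding T_def by (simp add: power_mult_distrib mult_ac)
qed

lemma card_collinear_triples_le_log:
  assumes fin: "finite A1" "finite A2" "finite A3"
    and card: "1 \<le> card A1" "card A1 \<le> card A2" "card A2 \<le> card A3"
  shows "real (card (collinear_triples A1 A2 A3))
           \<le> 12000000 * (real (card A1) * real (card A2) powr (5/3) * real (card A3) powr (4/3))
              * ln (2 + real (card A3)) ^ 3"
proof -
  define n1 n2 n3 where "n1 = real (card A1)" and "n2 = real (card A2)" and "n3 = real (card A3)"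
  define T where "T = n1 * n2 powr (5/3) * n3 powr (4/3)"
  define lg where "lg = ln (2 + n3)"
  have n: "1 \<le> n1" "n1 \<le> n2" "n2 \<le> n3" using card unfolding n1_def n2_def n3_def by simp_all
  have "0 \<le> T" using n unfolding T_def by simp
  have "8/27 * T \<le> lg ^ 3 * T"
    using ln_cube_lower_bound[of n3] \<open>0 \<le> T\<close> unfolding lg_def n3_def by (intro mult_right_mono) auto
  have "real (card (collinear_triples A1 A2 A3))
      \<le> real (card (oblique_triples A1 A2 A3) + 2 * card A1 ^ 2 * card A2 * card A3)"
    using card_collinear_triples_le[OF fin] by (simp only: of_nat_le_iff)
  also have "\<dots> = real (card (oblique_triples A1 A2 A3)) + 2 * (n1 ^ 2 * n2 * n3)"
    unfolding n1_def n2_def n3_def by simp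
  also have "\<dots> \<le> 12000000 * (T * lg ^ 3)"
    using card_oblique_triples_le_log[OF fin card] square_mult_le_weighted_product[OF n]
      \<open>8/27 * T \<le> lg ^ 3 * T\<close> \<open>0 \<le> T\<close>
    unfolding T_def lg_def n1_def n2_def n3_def by (simp add: mult_ac)
  finally show ?thesis unfolding T_def lg_def n1_def n2_def n3_def by (simp add: mult.assoc)
qed

lemma Tcol_Tsol_le:
  assumes fin: "finite A1" "finite A2" "finite A3"
    and card: "1 \<le> card A1" "card A1 \<le> card A2" "card A2 \<le> card A3"
  defines "T \<equiv> real (card A1) * real (card A2) powr (5/3) * real (card A3) powr (4/3)"
    and "lg \<equiv> ln (2 + real (card A3))"
  shows "real (Tcol A1 A2 A3) \<le> 100000000 * T * lg ^ 3"
    and "real (Tsol A1 A2 A3) \<le> 100000000 * (T + real (card A1) ^ 2 * real (card A3) ^ 2) * lg ^ 3"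
proof -
  have CT: "real (card (collinear_triples A1 A2 A3)) \<le> 12000000 * (T * lg ^ 3)"
    using card_collinear_triples_le_log[OF fin card] unfolding T_def lg_def by (simp add: mult.assoc)
  have "0 \<le> T * lg ^ 3" unfolding T_def lg_def by simp
  have "8/27 \<le> lg ^ 3" unfolding lg_def by (rule ln_cube_lower_bound) simp
  define M where "M = real (card A1) ^ 2 * real (card A3) ^ 2"
  have "0 \<le> M" unfolding M_def by simp
  have "8/27 * M \<le> lg ^ 3 * M" unfolding M_def using \<open>8/27 \<le> lg ^ 3\<close> by (rule mult_right_mono) simp
  have "real (card A1) ^ 2 * real (card A2) ^ 2 \<le> M"
    unfolding M_def using card by (intro mult_left_mono power_mono) auto
  have "real (Tcol A1 A2 A3) \<le> real (card (collinear_triples A1 A2 A3))"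
    using Tcol_le_card_collinear_triples[OF fin] by (simp only: of_nat_le_iff)
  with CT \<open>0 \<le> T * lg ^ 3\<close> show "real (Tcol A1 A2 A3) \<le> 100000000 * T * lg ^ 3"
    by (simp add: mult.assoc)
  have "real (Tsol A1 A2 A3) \<le> real (card (collinear_triples A1 A2 A3)
                                      + card A1 ^ 2 * card A3 ^ 2 + 2 * card A1 ^ 2 * card A2 ^ 2)"
    using Tsol_le[OF fin] by (simp only: of_nat_le_iff)
  also have "\<dots> \<le> 12000000 * (T * lg ^ 3) + M + 2 * M"
    using CT \<open>real (card A1) ^ 2 * real (card A2) ^ 2 \<le> M\<close> unfolding M_def by simp
  also have "\<dots> \<le> 100000000 * (T * lg ^ 3) + 100000000 * (lg ^ 3 * M)"
    using \<open>0 \<le> T * lg ^ 3\<close> \<open>8/27 * M \<le> lg ^ 3 * M\<close> \<open>0 \<le> M\<close> by linarith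
  finally show "real (Tsol A1 A2 A3)
      \<le> 100000000 * (T + real (card A1) ^ 2 * real (card A3) ^ 2) * lg ^ 3"
    unfolding M_def by (simp add: algebra_simps)
qed

theorem mainTheorem1:
  shows "\<exists>K e :: real. K > 0 \<and> e > 0 \<and>
    (\<forall>A1 A2 A3 :: real set. finite A1 \<longrightarrow> finite A2 \<longrightarrow> finite A3 \<longrightarrow>
       card A1 \<le> card A2 \<longrightarrow> card A2 \<le> card A3 \<longrightarrow>
       (let N = real (max (card A1) (max (card A2) (card A3))) in
         real (Tcol A1 A2 A3)
           \<le> K * (real (card A1) * real (card A2) powr (5/3) * real (card A3) powr (4/3))
                 * ln (2 + N) powr e
       \<and> real (Tsol A1 A2 A3)
           \<le> K * (real (card A1) * real (card A2) powr (5/3) * real (card A3) powr (4/3)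
                  + real (card A1) ^ 2 * real (card A3) ^ 2) * ln (2 + N) powr e))"
proof (rule exI[of _ 100000000], rule exI[of _ 3], intro conjI allI impI)
  fix A1 A2 A3 :: "real set"
  assume fin: "finite A1" "finite A2" "finite A3" and "card A1 \<le> card A2" "card A2 \<le> card A3"
  then have N: "real (max (card A1) (max (card A2) (card A3))) = real (card A3)" by simp
  have lg: "ln (2 + real (card A3)) powr 3 = ln (2 + real (card A3)) ^ 3"
    using powr_realpow[of "ln (2 + real (card A3))" 3] by simp
  show "let N = real (max (card A1) (max (card A2) (card A3))) in
         real (Tcol A1 A2 A3)
           \<le> 100000000 * (real (card A1) * real (card A2) powr (5/3) * real (card A3) powr (4/3))
                 * ln (2 + N) powr 3
       \<and> real (Tsol A1 A2 A3)
           \<le> 100000000 * (real (card A1) * real (card A2) powr (5/3) * real (card A3) powr (4/3)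
                  + real (card A1) ^ 2 * real (card A3) ^ 2) * ln (2 + N) powr 3"
  proof (cases "A1 = {}")
    case True
    then show ?thesis by (simp add: Tcol_def Tsol_def case_prod_unfold)
  next
    case False
    with fin have "1 \<le> card A1" by (simp add: Suc_le_eq card_gt_0_iff)
    from Tcol_Tsol_le[OF fin this \<open>card A1 \<le> card A2\<close> \<open>card A2 \<le> card A3\<close>]
    show ?thesis unfolding Let_def N lg by simp
  qed
qed simp_all

end
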